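(* For any weighted undirected graph $G=(V,E,w)$ with $n=|V|\ge2$ and any HC-tree $\mathcal T$ of $G$, $$C_G(\mathcal T)\ \ge\ \frac n3\cdot\min\Big\{w(S,\bar S)\ :\ S\subseteq V,\ \frac n3\le |S|,|\bar S|\le\frac{2n}3\Big\}.$$
   Context: For $G=(V,E,w)$ with nonnegative weights, an HC-tree is a rooted tree whose leaves are in bijection with $V$; its cost is $C_G(\mathcal T)=\sum_{(u,v)\in E}w(u,v)\,|\mathrm{leaves}(\mathcal T[u\vee v])|$ where $u\vee v$ is the lowest common ancestor and $\mathrm{leaves}(\mathcal T[z])$ the leaf set of the subtree rooted at $z$. $\bar S=V\setminus S$, and $w(S,\bar S)$ is the total weight of edges between $S$ and $\bar S$. *)

theory Defs
  imports Main "HOL.Real"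
begin

datatype 'a hct = Leaf 'a | Node "'a hct list"

fun leaves :: "'a hct \<Rightarrow> 'a list" where
  "leaves (Leaf a) = [a]"
| "leaves (Node ts) = concat (map leaves ts)"

fun subtrees :: "'a hct \<Rightarrow> 'a hct set" where
  "subtrees (Leaf a) = {Leaf a}"
| "subtrees (Node ts) = insert (Node ts) (\<Union>t\<in>set ts. subtrees t)"

fun wf_hct :: "'a hct \<Rightarrow> bool" where
  "wf_hct (Leaf a) = True"
| "wf_hct (Node ts) = (ts \<noteq> [] \<and> (\<forall>t\<in>set ts. wf_hct t))"

definition is_hc_tree :: "'a set \<Rightarrow> 'a hct \<Rightarrow> bool" where
  "is_hc_tree V T \<longleftrightarrow> wf_hct T \<and> distinct (leaves T) \<and> set (leaves T) = V"

text \<open>Number of leaves of the subtree rooted at the lowest common ancestor of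
the vertices in e: the lowest node whose subtree contains e.\<close>
definition lca_size :: "'a hct \<Rightarrow> 'a set \<Rightarrow> nat" where
  "lca_size T e = Min {card (set (leaves s)) | s. s \<in> subtrees T \<and> e \<subseteq> set (leaves s)}"

definition wgraph :: "'a set \<Rightarrow> 'a set set \<Rightarrow> ('a set \<Rightarrow> real) \<Rightarrow> bool" where
  "wgraph V E w \<longleftrightarrow> finite V \<and>
     E \<subseteq> {{u, v} | u v. u \<in> V \<and> v \<in> V \<and> u \<noteq> v} \<and> (\<forall>e\<in>E. w e \<ge> 0)"

definition hc_cost :: "'a set set \<Rightarrow> ('a set \<Rightarrow> real) \<Rightarrow> 'a hct \<Rightarrow> real" where
  "hc_cost E w T = (\<Sum>e\<in>E. w e * real (lca_size T e))"

definition cut_weight :: "'a set \<Rightarrow> 'a set set \<Rightarrow> ('a set \<Rightarrow> real) \<Rightarrow> 'a set \<Rightarrow> real" where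
  "cut_weight V E w S = (\<Sum>e\<in>{e\<in>E. e \<inter> S \<noteq> {} \<and> e \<inter> (V - S) \<noteq> {}}. w e)"

end

theory Submission
  imports Defs
begin

text \<open>Fix a set S of leaves, and call a subtree crossing if its leaf set meets S without being
contained in S. Every edge cut by S has a crossing lowest common ancestor, so if all crossing
subtrees have more than 2n/3 leaves, the cost is at least (2n/3) w(S, V - S). Such an S with
n/3 \<le> |S| \<le> 2n/3 exists: descend from the root into a child with more than 2n/3 leaves as long
as there is one; at the node where this stops, the children all have at most 2n/3 leaves and
together more than 2n/3, so some of them together carry between n/3 and 2n/3 leaves.\<close>

definition crosses :: "'a set \<Rightarrow> 'a set \<Rightarrow> bool" where
  "crosses S A \<longleftrightarrow> A \<inter> S \<noteq> {} \<and> \<not> A \<subseteq> S"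

lemma crosses_mono: "crosses S A \<Longrightarrow> A \<subseteq> B \<Longrightarrow> crosses S B"
  unfolding crosses_def by blast

lemma finite_subtrees: "finite (subtrees t)"
  by (induction t) auto

lemma self_in_subtrees: "t \<in> subtrees t"
  by (cases t) auto

lemma child_in_subtrees: "c \<in> set ts \<Longrightarrow> c \<in> subtrees (Node ts)"
  using self_in_subtrees[of c] by auto

lemma leaves_subtree_subset: "s \<in> subtrees t \<Longrightarrow> set (leaves s) \<subseteq> set (leaves t)"
  by (induction t) auto

lemma distinct_leaves_subtree: "s \<in> subtrees t \<Longrightarrow> distinct (leaves t) \<Longrightarrow> distinct (leaves s)"
  by (induction t) (auto simp: distinct_concat_iff)

lemma disjoint_leaves_children:
  "distinct (leaves (Node ts)) \<Longrightarrow> c \<in> set ts \<Longrightarrow> c' \<in> set ts \<Longrightarrow> c \<noteq> c'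
   \<Longrightarrow> set (leaves c) \<inter> set (leaves c') = {}"
  by (induction ts) auto

lemma crossing_subtree_of_Node:
  assumes "s \<in> subtrees (Node ts)" and "crosses S (set (leaves s))"
  obtains "s = Node ts"
  | c where "c \<in> set ts" "s \<in> subtrees c" "crosses S (set (leaves c))"
  using assms crosses_mono leaves_subtree_subset by fastforce

lemma lca_size_attained:
  assumes "e \<subseteq> set (leaves T)"
  shows "\<exists>s\<in>subtrees T. e \<subseteq> set (leaves s) \<and> lca_size T e = card (set (leaves s))"
proof -
  let ?A = "{card (set (leaves s)) | s. s \<in> subtrees T \<and> e \<subseteq> set (leaves s)}"
  have "finite ?A" using finite_subtrees[of T] by simp
  moreover have "?A \<noteq> {}" using self_in_subtrees[of T] assms by auto
  ultimately have "Min ?A \<in> ?A" by (rule Min_in)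
  then show ?thesis unfolding lca_size_def by auto
qed

lemma subset_sum_between:
  fixes f :: "'b \<Rightarrow> real"
  assumes "finite C" "0 \<le> a" "\<forall>c\<in>C. f c \<le> 2 * a" "a \<le> sum f C"
  shows "\<exists>D\<subseteq>C. a \<le> sum f D \<and> sum f D \<le> 2 * a"
  using assms
proof (induction C rule: finite_induct)
  case empty
  then show ?case by auto
next
  case (insert x C)
  show ?case
  proof (cases "a \<le> sum f C")
    case True
    then show ?thesis using insert by blast
  next
    case False
    show ?thesis
    proof (cases "a \<le> f x")
      case True
      then show ?thesis using insert.prems by (intro exI[of _ "{x}"]) auto
    next
      case False
      then show ?thesis using \<open>\<not> a \<le> sum f C\<close> insert by (intro exI[of _ "insert x C"]) auto
    qed
  qed
qed

lemma balanced_leaf_set: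
  fixes t :: "'a hct" and a :: real
  assumes "distinct (leaves t)" and "1 \<le> 2 * a" and "2 * a < card (set (leaves t))"
  shows "\<exists>S\<subseteq>set (leaves t). a \<le> card S \<and> card S \<le> 2 * a \<and>
           (\<forall>s\<in>subtrees t. crosses S (set (leaves s)) \<longrightarrow> 2 * a < card (set (leaves s)))"
  using assms
proof (induction t)
  case (Leaf x)
  then show ?case by simp
next
  case (Node ts)
  let ?L = "\<lambda>c. set (leaves c)"
  have distinct_child: "distinct (leaves c)" if "c \<in> set ts" for c
    using distinct_leaves_subtree[OF child_in_subtrees[OF that] Node.prems(1)] .
  have disjoint: "?L c \<inter> ?L c' = {}" if "c \<in> set ts" "c' \<in> set ts" "c \<noteq> c'" for c c'
    using disjoint_leaves_children[OF Node.prems(1)] that by blast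
  consider (big_child) c where "c \<in> set ts" "2 * a < card (?L c)"
    | (small_children) "\<forall>c\<in>set ts. card (?L c) \<le> 2 * a"
    by force
  then show ?case
  proof cases
    case big_child
    then obtain S where S: "S \<subseteq> ?L c" "a \<le> card S" "card S \<le> 2 * a"
      and crossing: "\<forall>s\<in>subtrees c. crosses S (?L s) \<longrightarrow> 2 * a < card (?L s)"
      using Node.IH[OF big_child(1) distinct_child[OF big_child(1)] Node.prems(2) big_child(2)]
      by blast
    have "2 * a < card (?L s)" if "s \<in> subtrees (Node ts)" "crosses S (?L s)" for s
      using that
    proof (cases rule: crossing_subtree_of_Node)
      case 1
      then show ?thesis using Node.prems(3) by simp
    next
      case (2 c')
      have "c' = c"
        using disjoint[of c' c] 2 big_child S(1) unfolding crosses_def by blast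
      then show ?thesis using crossing 2 that(2) by blast
    qed
    then show ?thesis using S big_child by (intro exI[of _ S]) auto
  next
    case small_children
    let ?f = "\<lambda>c. real (card (?L c))"
    have "card (?L (Node ts)) = (\<Sum>c\<in>set ts. card (?L c))"
      by (simp add: card_UN_disjoint disjoint)
    then have "a \<le> sum ?f (set ts)"
      using Node.prems(2,3) by simp
    then obtain D where D: "D \<subseteq> set ts" "a \<le> sum ?f D" "sum ?f D \<le> 2 * a"
      using subset_sum_between[of "set ts" a ?f] small_children Node.prems(2) by auto
    define S where "S = (\<Union>c\<in>D. ?L c)"
    have "card S = (\<Sum>c\<in>D. card (?L c))"
      unfolding S_def using D(1) disjoint
      by (intro card_UN_disjoint) (auto intro: finite_subset)
    then have card_S: "a \<le> card S" "card S \<le> 2 * a" using D by simp_all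
    have no_crossing_child: "\<not> crosses S (?L c)" if "c \<in> set ts" for c
    proof (cases "c \<in> D")
      case False
      then have "?L c \<inter> S = {}" unfolding S_def using disjoint that D(1) by blast
      then show ?thesis unfolding crosses_def by blast
    qed (auto simp: crosses_def S_def)
    have "2 * a < card (?L s)" if "s \<in> subtrees (Node ts)" "crosses S (?L s)" for s
      using that by (cases rule: crossing_subtree_of_Node)
        (use Node.prems(3) no_crossing_child in auto)
    moreover have "S \<subseteq> ?L (Node ts)" unfolding S_def using D(1) by auto
    ultimately show ?thesis using card_S by blast
  qed
qed

lemma hc_cost_ge_cut_weight:
  assumes "wgraph V E w" and "\<forall>e\<in>E. crosses S e \<longrightarrow> b \<le> real (lca_size T e)"
  shows "b * cut_weight V E w S \<le> hc_cost E w T"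
proof -
  have edges: "E \<subseteq> Pow V" and weights: "\<forall>e\<in>E. 0 \<le> w e" and "finite V"
    using assms(1) unfolding wgraph_def by auto
  then have "finite E" by (meson finite_Pow_iff finite_subset)
  let ?C = "{e\<in>E. e \<inter> S \<noteq> {} \<and> e \<inter> (V - S) \<noteq> {}}"
  have "b * cut_weight V E w S = (\<Sum>e\<in>?C. b * w e)"
    unfolding cut_weight_def by (simp add: sum_distrib_left)
  also have "\<dots> \<le> (\<Sum>e\<in>?C. w e * real (lca_size T e))"
  proof (rule sum_mono)
    fix e assume e: "e \<in> ?C"
    then have "crosses S e" unfolding crosses_def by blast
    then have "b \<le> real (lca_size T e)" using assms(2) e by blast
    moreover have "0 \<le> w e" using weights e by blast
    ultimately show "b * w e \<le> w e * real (lca_size T e)"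
      by (metis mult.commute mult_right_mono)
  qed
  also have "\<dots> \<le> hc_cost E w T"
    unfolding hc_cost_def using \<open>finite E\<close> weights by (intro sum_mono2) auto
  finally show ?thesis .
qed

theorem lemma5p8:
  fixes V :: "'a set" and E :: "'a set set" and w :: "'a set \<Rightarrow> real" and T :: "'a hct"
  assumes "wgraph V E w"
    and "card V \<ge> 2"
    and "is_hc_tree V T"
  shows "hc_cost E w T \<ge> real (card V) / 3 *
    Min {cut_weight V E w S | S. S \<subseteq> V
           \<and> real (card V) / 3 \<le> real (card S) \<and> real (card S) \<le> 2 * real (card V) / 3
           \<and> real (card V) / 3 \<le> real (card (V - S)) \<and> real (card (V - S)) \<le> 2 * real (card V) / 3}"
    (is "_ \<ge> ?a * Min ?M")
proof -
  have "finite V" using assms(1) unfolding wgraph_def by simp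
  have T: "distinct (leaves T)" "set (leaves T) = V"
    using assms(3) unfolding is_hc_tree_def by auto
  then obtain S where S: "S \<subseteq> V" "?a \<le> card S" "card S \<le> 2 * ?a"
    and crossing: "\<forall>s\<in>subtrees T. crosses S (set (leaves s)) \<longrightarrow> 2 * ?a < card (set (leaves s))"
    using balanced_leaf_set[of T ?a] assms(2) by auto
  have "card (V - S) = card V - card S" "card S \<le> card V"
    using S(1) \<open>finite V\<close> by (auto simp: card_Diff_subset finite_subset card_mono)
  then have "cut_weight V E w S \<in> ?M" using S by (auto simp: of_nat_diff)
  moreover have "finite ?M"
    using \<open>finite V\<close> by (auto intro: finite_subset[of _ "(\<lambda>S. cut_weight V E w S) ` Pow V"])
  ultimately have "?a * Min ?M \<le> ?a * cut_weight V E w S" by (simp add: mult_left_mono)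
  also have "\<dots> \<le> hc_cost E w T"
  proof (rule hc_cost_ge_cut_weight[OF assms(1)], intro ballI impI)
    fix e assume "e \<in> E" "crosses S e"
    have "e \<subseteq> V" using \<open>e \<in> E\<close> assms(1) unfolding wgraph_def by blast
    then obtain s where "s \<in> subtrees T" "e \<subseteq> set (leaves s)" "lca_size T e = card (set (leaves s))"
      using lca_size_attained T(2) by blast
    then show "?a \<le> real (lca_size T e)"
      using crossing crosses_mono[OF \<open>crosses S e\<close>] by fastforce
  qed
  finally show ?thesis .
qed

end
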